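(* Let $k$ be a field of characteristic $0$, let $A$ be a $k$-algebra, let $\mathfrak{p}$ be a prime ideal of $A$, and let $\alpha\colon A\to K[t]/(t^{m+1})$ be an $m$-jet of $A$ centered at $\mathfrak{p}$ and valued in a field extension $K/k$. Suppose that for some field extension $E/K$ there is a $k$-algebra map $A\to E[t]/(t^{m+2})$ whose reduction modulo $t^{m+1}$ equals $\alpha$ composed with $K[t]/(t^{m+1})\to E[t]/(t^{m+1})$. Then there is a $k$-algebra map $\beta\colon A\to K[t]/(t^{m+2})$ whose reduction modulo $t^{m+1}$ equals $\alpha$.
   Context: An $m$-jet of a $k$-algebra $A$ valued in $K$ is a $k$-algebra homomorphism $A\to K[t]/(t^{m+1})$; its center is the kernel of its reduction modulo $t$, a prime ideal. *)

theory Defs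
  imports "HOL-Computational_Algebra.Polynomial"
begin

definition is_ring_hom :: "('a::comm_ring_1 \<Rightarrow> 'b::comm_ring_1) \<Rightarrow> bool" where
  "is_ring_hom f \<longleftrightarrow> f 1 = 1 \<and> (\<forall>x y. f (x + y) = f x + f y) \<and> (\<forall>x y. f (x * y) = f x * f y)"

definition is_prime_ideal :: "'a::comm_ring_1 set \<Rightarrow> bool" where
  "is_prime_ideal P \<longleftrightarrow> 0 \<in> P \<and> (\<forall>x\<in>P. \<forall>y\<in>P. x + y \<in> P) \<and> (\<forall>x\<in>P. \<forall>r. r * x \<in> P)
     \<and> 1 \<notin> P \<and> (\<forall>x y. x * y \<in> P \<longrightarrow> x \<in> P \<or> y \<in> P)"

text \<open>The truncated polynomial ring L[t]/(t^(n)) is modelled by polynomials of degree < n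
  (canonical representatives), with multiplication followed by \<open>poly_cutoff n\<close>.
  \<open>is_jet \<iota>A \<iota>L m \<phi>\<close>: \<phi> is a k-algebra homomorphism A \<rightarrow> L[t]/(t^(m+1)),
  where the k-algebra structures of A and L are given by the ring homomorphisms
  \<iota>A : k \<rightarrow> A and \<iota>L : k \<rightarrow> L.\<close>
definition is_jet ::
  "('k::field \<Rightarrow> 'a::comm_ring_1) \<Rightarrow> ('k \<Rightarrow> 'l::field) \<Rightarrow> nat \<Rightarrow> ('a \<Rightarrow> 'l poly) \<Rightarrow> bool" where
  "is_jet \<iota>A \<iota>L m \<phi> \<longleftrightarrow>
     (\<forall>a. degree (\<phi> a) \<le> m) \<and>
     \<phi> 1 = 1 \<and>
     (\<forall>a b. \<phi> (a + b) = \<phi> a + \<phi> b) \<and>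
     (\<forall>a b. \<phi> (a * b) = poly_cutoff (Suc m) (\<phi> a * \<phi> b)) \<and>
     (\<forall>c. \<phi> (\<iota>A c) = [:\<iota>L c:])"

definition jet_center :: "('a \<Rightarrow> 'l::zero poly) \<Rightarrow> 'a set" where
  "jet_center \<phi> = {a. coeff (\<phi> a) 0 = 0}"

end

theory Submission
  imports Defs
begin

text \<open>Regard \<open>E\<close> as a \<open>K\<close>-vector space
  and choose a \<open>K\<close>-linear retraction \<open>l : E \<rightarrow> K\<close> of the embedding. Applying \<open>l\<close> coefficientwise
  to the given \<open>(m+1)\<close>-jet over \<open>E\<close> gives an \<open>(m+1)\<close>-jet over \<open>K\<close>: it is multiplicative modulo
  \<open>t^(m+2)\<close> because in each product of coefficients of total degree \<open>\<le> m+1\<close> one factor has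
  degree \<open>\<le> m\<close>, hence lies in \<open>K\<close>, and \<open>l\<close> is \<open>K\<close>-linear. Its truncation is \<open>\<alpha>\<close> since \<open>l\<close> fixes \<open>K\<close>.\<close>

lemma is_ring_hom_0:
  assumes "is_ring_hom f"
  shows "f 0 = 0"
proof -
  have "f 0 + f 0 = f 0 + 0"
    using assms unfolding is_ring_hom_def by (metis add_0_right)
  then show ?thesis by simp
qed

lemma field_hom_linear_retraction:
  fixes j :: "'K::field \<Rightarrow> 'E::field"
  assumes "is_ring_hom j"
  obtains l where "Vector_Spaces.linear (\<lambda>c e. j c * e) (*) l" and "\<And>c. l (j c) = c"
proof -
  have j: "j 1 = 1" "\<And>x y. j (x + y) = j x + j y" "\<And>x y. j (x * y) = j x * j y"
    using assms unfolding is_ring_hom_def by auto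
  interpret E: vector_space "\<lambda>c e. j c * e"
    by unfold_locales (auto simp: j algebra_simps)
  interpret K: vector_space "(*) :: 'K \<Rightarrow> 'K \<Rightarrow> 'K"
    by unfold_locales (auto simp: algebra_simps)
  interpret vector_space_pair "\<lambda>c e. j c * e" "(*) :: 'K \<Rightarrow> 'K \<Rightarrow> 'K"
    by unfold_locales
  have "E.independent {1}"
    by (simp add: E.independent_insert)
  then obtain l where lin: "Vector_Spaces.linear (\<lambda>c e. j c * e) (*) l" and l1: "l 1 = 1"
    using linear_independent_extend[of "{1}" "\<lambda>_. 1"] by auto
  interpret Vector_Spaces.linear "\<lambda>c e. j c * e" "(*)" l
    by (fact lin)
  have "l (j c) = c" for c
    using scale[of c 1] l1 by simp
  with lin show thesis
    by (rule that)
qed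

lemma retraction_mult_left:
  assumes "Vector_Spaces.linear (\<lambda>c e. j c * e) (*) l" and "\<And>c. l (j c) = c"
    and "x \<in> range j"
  shows "l (x * y) = l x * l y"
proof -
  interpret Vector_Spaces.linear "\<lambda>c e. j c * e" "(*)" l
    by (fact assms(1))
  show ?thesis
    using assms(2,3) scale by auto
qed

lemma poly_cutoff_map_poly:
  assumes "f 0 = 0"
  shows "poly_cutoff n (map_poly f p) = map_poly f (poly_cutoff n p)"
  by (rule poly_eqI) (simp add: coeff_poly_cutoff coeff_map_poly assms)

lemma coeff_map_poly_retraction_mult:
  fixes j :: "'K::field \<Rightarrow> 'E::field"
  assumes lin: "Vector_Spaces.linear (\<lambda>c e. j c * e) (*) l" and ret: "\<And>c. l (j c) = c"
    and p: "\<And>i. i \<le> m \<Longrightarrow> coeff p i \<in> range j"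
    and q: "\<And>i. i \<le> m \<Longrightarrow> coeff q i \<in> range j"
    and "n \<le> Suc m"
  shows "coeff (map_poly l (p * q)) n = coeff (map_poly l p * map_poly l q) n"
proof -
  interpret Vector_Spaces.linear "\<lambda>c e. j c * e" "(*)" l
    by (fact lin)
  have "l (coeff p i * coeff q (n - i)) = l (coeff p i) * l (coeff q (n - i))" for i
  proof (cases "i \<le> m")
    case True
    then show ?thesis using retraction_mult_left[OF lin ret p] by blast
  next
    case False
    then have "n - i \<le> m" using \<open>n \<le> Suc m\<close> by linarith
    then show ?thesis using retraction_mult_left[OF lin ret q] by (metis mult.commute)
  qed
  then show ?thesis
    by (simp add: coeff_map_poly coeff_mult sum)
qed

lemma is_jet_map_poly_retraction:
  fixes j :: "'K::field \<Rightarrow> 'E::field"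
  assumes "is_ring_hom j"
    and lin: "Vector_Spaces.linear (\<lambda>c e. j c * e) (*) l" and ret: "\<And>c. l (j c) = c"
    and \<gamma>: "is_jet \<iota>A (j \<circ> \<iota>K) (Suc m) \<gamma>"
    and low: "\<And>a i. i \<le> m \<Longrightarrow> coeff (\<gamma> a) i \<in> range j"
  shows "is_jet \<iota>A \<iota>K (Suc m) (\<lambda>a. map_poly l (\<gamma> a))"
  unfolding is_jet_def
proof (intro conjI allI)
  interpret Vector_Spaces.linear "\<lambda>c e. j c * e" "(*)" l
    by (fact lin)
  have \<gamma>_jet: "\<forall>a. degree (\<gamma> a) \<le> Suc m" "\<gamma> 1 = 1" "\<forall>a b. \<gamma> (a + b) = \<gamma> a + \<gamma> b"
    "\<forall>a b. \<gamma> (a * b) = poly_cutoff (Suc (Suc m)) (\<gamma> a * \<gamma> b)"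
    "\<forall>c. \<gamma> (\<iota>A c) = [:j (\<iota>K c):]"
    using \<gamma> unfolding is_jet_def by auto
  fix a b c
  have "degree (map_poly l (\<gamma> a)) \<le> degree (\<gamma> a)"
    by (rule degree_le) (simp add: coeff_map_poly coeff_eq_0)
  with \<gamma>_jet(1) show "degree (map_poly l (\<gamma> a)) \<le> Suc m"
    using order.trans by blast
  have "l 1 = 1"
    using ret[of 1] assms(1) unfolding is_ring_hom_def by simp
  with \<gamma>_jet(2) show "map_poly l (\<gamma> 1) = 1"
    by simp
  show "map_poly l (\<gamma> (a + b)) = map_poly l (\<gamma> a) + map_poly l (\<gamma> b)"
    using \<gamma>_jet(3) by (simp add: poly_eq_iff coeff_map_poly add)
  show "map_poly l (\<gamma> (\<iota>A c)) = [:\<iota>K c:]"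
    using \<gamma>_jet(5) by (simp add: map_poly_pCons ret)
  show "map_poly l (\<gamma> (a * b)) = poly_cutoff (Suc (Suc m)) (map_poly l (\<gamma> a) * map_poly l (\<gamma> b))"
  proof (rule poly_eqI)
    fix n
    have "n \<le> Suc m \<Longrightarrow>
        coeff (map_poly l (\<gamma> a * \<gamma> b)) n = coeff (map_poly l (\<gamma> a) * map_poly l (\<gamma> b)) n"
      by (rule coeff_map_poly_retraction_mult[OF lin ret low low])
    with \<gamma>_jet(4) show "coeff (map_poly l (\<gamma> (a * b))) n
        = coeff (poly_cutoff (Suc (Suc m)) (map_poly l (\<gamma> a) * map_poly l (\<gamma> b))) n"
      by (simp add: coeff_map_poly coeff_poly_cutoff)
  qed
qed

theorem proposition3p8:
  fixes \<iota>A :: "'k::field_char_0 \<Rightarrow> 'a::comm_ring_1"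
    and \<iota>K :: "'k \<Rightarrow> 'K::field"
    and j :: "'K \<Rightarrow> 'E::field"
    and P :: "'a set"
    and m :: nat
    and \<alpha> :: "'a \<Rightarrow> 'K poly"
    and \<gamma> :: "'a \<Rightarrow> 'E poly"
  assumes "is_ring_hom \<iota>A"
    and "is_ring_hom \<iota>K"
    and "is_ring_hom j"
    and "is_prime_ideal P"
    and "is_jet \<iota>A \<iota>K m \<alpha>"
    and "jet_center \<alpha> = P"
    and "is_jet \<iota>A (j \<circ> \<iota>K) (Suc m) \<gamma>"
    and "\<forall>a. poly_cutoff (Suc m) (\<gamma> a) = map_poly j (\<alpha> a)"
  shows "\<exists>\<beta>. is_jet \<iota>A \<iota>K (Suc m) \<beta> \<and> (\<forall>a. poly_cutoff (Suc m) (\<beta> a) = \<alpha> a)"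
proof -
  obtain l where lin: "Vector_Spaces.linear (\<lambda>c e. j c * e) (*) l" and ret: "\<And>c. l (j c) = c"
    using field_hom_linear_retraction[OF \<open>is_ring_hom j\<close>] by blast
  interpret Vector_Spaces.linear "\<lambda>c e. j c * e" "(*)" l
    by (fact lin)
  have j0: "j 0 = 0"
    using is_ring_hom_0[OF \<open>is_ring_hom j\<close>] .
  have low: "coeff (\<gamma> a) i \<in> range j" if "i \<le> m" for a i
    using arg_cong[OF assms(8)[rule_format, of a], of "\<lambda>p. coeff p i"] that
    by (simp add: coeff_poly_cutoff coeff_map_poly j0)
  have "poly_cutoff (Suc m) (map_poly l (\<gamma> a)) = \<alpha> a" for a
    using assms(8) by (simp add: poly_cutoff_map_poly map_poly_map_poly j0 o_def ret)
  with is_jet_map_poly_retraction[OF \<open>is_ring_hom j\<close> lin ret assms(7) low] show ?thesis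
    by blast
qed

end
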